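(* Let $r\ge 3$ be an integer and let $x>1$ be a real number such that $\binom{x}{2}=\frac{x(x-1)}{2}$ is a positive integer. Then \[f\left(r,3,\tfrac{x(x-1)}{2}\right)\le \frac{x(x-1)(x-2)}{6}.\]
   Context: $\mathbb{N}^{(s)}$ denotes the family of all $s$-element subsets of $\mathbb{N}$. For integers $0\le k\le r$ and $b\ge 0$, $f(r,k,b)$ denotes the maximum of $|\mathcal{A}|$ over all pairs of families $\mathcal{A}\subset\mathbb{N}^{(r)}$, $\mathcal{B}\subset\mathbb{N}^{(r-1)}$ with $|\mathcal{B}|=b$ such that for every $A\in\mathcal{A}$ there exist $k$ distinct sets $B_1,\dots,B_k\in\mathcal{B}$ with $B_i\subset A$ for all $i$. *)

theory Defs
  imports Complex_Main "HOL-Library.Extended_Real"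
begin

definition ksubsets :: "nat \<Rightarrow> nat set set" where
  "ksubsets s = {S. finite S \<and> card S = s}"

definition admissible :: "nat \<Rightarrow> nat \<Rightarrow> nat \<Rightarrow> nat set set \<Rightarrow> nat set set \<Rightarrow> bool" where
  "admissible r k b \<A> \<B> \<longleftrightarrow>
     \<A> \<subseteq> ksubsets r \<and> \<B> \<subseteq> ksubsets (r - 1) \<and> finite \<B> \<and> card \<B> = b \<and>
     (\<forall>A\<in>\<A>. \<exists>C. C \<subseteq> \<B> \<and> finite C \<and> card C = k \<and> (\<forall>B\<in>C. B \<subseteq> A))"

definition f :: "nat \<Rightarrow> nat \<Rightarrow> nat \<Rightarrow> ereal" where
  "f r k b = Sup {ereal (real (card \<A>)) | \<A> \<B>. finite \<A> \<and> admissible r k b \<A> \<B>}"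

end

theory Submission
  imports Defs
begin

(* Induction on r + |B|.  Fix a vertex u of some member of A and split A into the sets
   avoiding u (A1), the sets A containing u with A - {u} in B (A2), and the other sets
   containing u (A3); split B into the sets containing u (B_u, d of them) and the rest
   (B_n).  A1 is admissible over B_n, and the links at u of A3 are admissible for r - 1
   over the link of B_u, since all three witnesses of such a set contain u; induction
   bounds both.  A2 injects into B_n via A - {u}.  Two distinct (r-1)-sets lie in at
   most one r-set, so counting pairs from B_u below the members of A2 and A3 gives
   3 |A3| + |A2| <= (d choose 2).  What remains is an inequality between real binomial
   coefficients. *)

lemma gchoose_two_real: "(a::real) gchoose 2 = a * (a - 1) / 2"
  by (simp add: gbinomial_prod_rev numeral_2_eq_2)

lemma gchoose_three_real: "(a::real) gchoose 3 = a * (a - 1) * (a - 2) / 6"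
  by (simp add: gbinomial_prod_rev numeral_3_eq_3 numeral_2_eq_2 field_simps)

definition choose2_inv :: "real \<Rightarrow> real" where
  "choose2_inv b = (1 + sqrt (1 + 8 * b)) / 2"

lemma choose2_inv_gchoose_two: "0 \<le> b \<Longrightarrow> choose2_inv b gchoose 2 = b"
  unfolding choose2_inv_def gchoose_two_real
  by (simp add: field_simps power2_eq_square[symmetric])

lemma choose2_inv_of_gchoose_two:
  assumes "1/2 \<le> x"
  shows "choose2_inv (x gchoose 2) = x"
proof -
  have "1 + 8 * (x gchoose 2) = (2 * x - 1)\<^sup>2"
    unfolding gchoose_two_real power2_eq_square by (simp add: field_simps)
  then show ?thesis
    using assms unfolding choose2_inv_def by simp
qed

lemma choose2_inv_mono: "b \<le> b' \<Longrightarrow> choose2_inv b \<le> choose2_inv b'"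
  unfolding choose2_inv_def by simp

lemma choose2_inv_ge_one: "0 \<le> b \<Longrightarrow> 1 \<le> choose2_inv b"
  unfolding choose2_inv_def by simp

lemma choose2_inv_le:
  assumes "1/2 \<le> w" "b \<le> w gchoose 2"
  shows "choose2_inv b \<le> w"
proof -
  have "1 + 8 * b \<le> (2 * w - 1)\<^sup>2"
    using assms(2) by (simp add: gchoose_two_real power2_eq_square field_simps)
  then have "sqrt (1 + 8 * b) \<le> 2 * w - 1"
    using assms(1) real_sqrt_le_mono by fastforce
  then show ?thesis
    unfolding choose2_inv_def by simp
qed

lemma choose2_inv_gchoose_three_nonneg: "0 \<le> choose2_inv (real n) gchoose 3"
proof (cases "n = 0")
  case True
  then show ?thesis
    by (simp add: choose2_inv_def gchoose_three_real)
next
  case False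
  then have "choose2_inv (2 gchoose 2) \<le> choose2_inv (real n)"
    by (intro choose2_inv_mono) (simp add: gchoose_two_real)
  then have "2 \<le> choose2_inv (real n)"
    using choose2_inv_of_gchoose_two[of 2] by simp
  then show ?thesis
    by (simp add: gchoose_three_real)
qed

lemma gchoose_three_increment_close:
  fixes x y :: real
  assumes "1 \<le> y" "y \<le> x" "x \<le> y + 1"
  shows "((x gchoose 2) - (y gchoose 2)) gchoose 2 \<le> (x gchoose 3) - (y gchoose 3)"
proof -
  define t where "t = x - y"
  have "24 * ((x gchoose 3) - (y gchoose 3) - (((x gchoose 2) - (y gchoose 2)) gchoose 2))
      = 2 * t * ((1 - t) * (3 * x - 2 - 2 * t))
        + 3 * (t * (2 * y + t - 1)) * ((1 - t) * (2 * x - 2 - t))"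
    unfolding gchoose_two_real gchoose_three_real t_def by (simp add: field_simps)
  moreover have "0 \<le> 2 * t * ((1 - t) * (3 * x - 2 - 2 * t))
      + 3 * (t * (2 * y + t - 1)) * ((1 - t) * (2 * x - 2 - t))"
    using assms unfolding t_def by (intro add_nonneg_nonneg mult_nonneg_nonneg) auto
  ultimately show ?thesis
    by simp
qed

lemma gchoose_three_increment_mid:
  fixes x y :: real
  assumes "1 \<le> y" "y + 1 \<le> x" "x \<le> y + 2"
  shows "(((x gchoose 2) - (y gchoose 2)) gchoose 2) / 3 + 2 / 3 * (y gchoose 2)
    \<le> (x gchoose 3) - (y gchoose 3)"
proof -
  define t where "t = x - y"
  have "72 * ((x gchoose 3) - (y gchoose 3) - (((x gchoose 2) - (y gchoose 2)) gchoose 2) / 3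
        - 2 / 3 * (y gchoose 2))
      = 3 * (t - 1) * (2 - t) * (4 * (y * y - 1) + 4 * (t - 1) * (y - 1) + t * t + t)"
    unfolding gchoose_two_real gchoose_three_real t_def by (simp add: field_simps)
  moreover have "1 \<le> y * y"
    using assms(1) by (metis mult_mono' mult_1 zero_le_one)
  then have "0 \<le> 3 * (t - 1) * (2 - t) * (4 * (y * y - 1) + 4 * (t - 1) * (y - 1) + t * t + t)"
    using assms unfolding t_def by (intro add_nonneg_nonneg mult_nonneg_nonneg) auto
  ultimately show ?thesis
    by simp
qed

(* z = choose2_inv d satisfies z gchoose 3 = d (z - 2) / 3, so the claim is z <= w for
   w = 3 K / d + 2, and the hypothesis says exactly d <= w gchoose 2. *)
lemma choose2_inv_gchoose_three_le:
  fixes d K :: real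
  assumes "0 < d" "0 \<le> K" "2 * d^3 \<le> (3*K + 2*d) * (3*K + d)"
  shows "choose2_inv d gchoose 3 \<le> K"
proof -
  define w where "w = 3 * K / d + 2"
  have "w * d = 3 * K + 2 * d"
    using assms(1) unfolding w_def by (simp add: field_simps)
  then have "w * (w - 1) * d^2 = (3*K + 2*d) * (3*K + d)"
    by algebra
  then have "(2 * d) * d^2 \<le> (w * (w - 1)) * d^2"
    using assms(3) by (simp add: power3_eq_cube power2_eq_square mult.assoc)
  then have "d \<le> w gchoose 2"
    using assms(1) by (simp add: gchoose_two_real mult_le_cancel_right)
  moreover have "2 \<le> w"
    using assms(1,2) unfolding w_def by simp
  ultimately have "choose2_inv d \<le> w"
    by (intro choose2_inv_le) auto
  have "choose2_inv d gchoose 3 = d * (choose2_inv d - 2) / 3"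
    using choose2_inv_gchoose_two[of d] assms(1)
    by (simp add: gchoose_two_real gchoose_three_real field_simps)
  also have "\<dots> \<le> d * (w - 2) / 3"
    using \<open>choose2_inv d \<le> w\<close> assms(1) by (simp add: divide_right_mono)
  also have "\<dots> = K"
    using assms(1) unfolding w_def by (simp add: field_simps)
  finally show ?thesis .
qed

lemma gchoose_three_increment_far:
  fixes x y :: real
  assumes "1 \<le> y" "y + 2 \<le> x"
  shows "(choose2_inv ((x gchoose 2) - (y gchoose 2)) gchoose 3) + (y gchoose 2)
    \<le> (x gchoose 3) - (y gchoose 3)"
proof -
  define d where "d = (x gchoose 2) - (y gchoose 2)"
  define K where "K = (x gchoose 3) - (y gchoose 3) - (y gchoose 2)"
  define v s where "v = y - 1" and "s = x - y - 2"
  have vs: "0 \<le> v" "0 \<le> s" "x = v + s + 3" "y = v + 1"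
    using assms by (auto simp: v_def s_def)
  have d_poly: "2 * d = 6 + 5*s + s^2 + 4*v + 2*v*s"
    unfolding d_def gchoose_two_real vs(3,4) by (simp add: field_simps power2_eq_square)
  have K_poly: "6 * K = 11*s + 6*s^2 + s^3 + 9*v + 12*v*s + 3*v*s^2 + 3*v^2 + 3*v^2*s + 6"
    unfolding K_def gchoose_two_real gchoose_three_real vs(3,4)
    by (simp add: field_simps power2_eq_square power3_eq_cube)
  have "0 < d"
    using d_poly vs by (smt (verit) mult_nonneg_nonneg zero_le_power)
  moreover have "0 \<le> K"
    using K_poly vs by (smt (verit) mult_nonneg_nonneg zero_le_power)
  moreover have "2 * d^3 \<le> (3*K + 2*d) * (3*K + d)"
  proof -
    define P where "P = 6*v + 53*v*s + 59*v*s^2 + 23*v*s^3 + 3*v*s^4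
       + 23*v^2 + 119*v^2*s + 110*v^2*s^2 + 33*v^2*s^3 + 3*v^2*s^4
       + 26*v^3 + 84*v^3*s + 60*v^3*s^2 + 10*v^3*s^3 + 9*v^4 + 18*v^4*s + 9*v^4*s^2"
    have "(3*K + 2*d) * (3*K + d) - 2*d^3 = P / 4"
      using d_poly K_poly unfolding P_def by algebra
    moreover have "0 \<le> P"
      unfolding P_def using vs by (intro add_nonneg_nonneg mult_nonneg_nonneg zero_le_power) auto
    ultimately show ?thesis
      by simp
  qed
  ultimately have "choose2_inv d gchoose 3 \<le> K"
    by (rule choose2_inv_gchoose_three_le)
  then show ?thesis
    unfolding K_def d_def by simp
qed

(* With x = choose2_inv b and y = choose2_inv (b - d): for x - y <= 1 the pair bound
   3 alpha + beta <= d gchoose 2 suffices alone, for x - y >= 2 the separate bounds on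
   alpha and beta suffice, and in between a convex combination of the pair bound and the
   bound on beta is used. *)
lemma choose2_inv_gchoose_three_split:
  fixes b d \<alpha> \<beta> :: real
  assumes "0 \<le> d" "d \<le> b" "0 \<le> \<alpha>" "\<alpha> \<le> choose2_inv d gchoose 3" "\<beta> \<le> b - d"
    and "3 * \<alpha> + \<beta> \<le> d gchoose 2"
  shows "(choose2_inv (b - d) gchoose 3) + \<alpha> + \<beta> \<le> choose2_inv b gchoose 3"
proof -
  define x y where "x = choose2_inv b" and "y = choose2_inv (b - d)"
  have x2: "x gchoose 2 = b" and y2: "y gchoose 2 = b - d"
    using assms(1,2) choose2_inv_gchoose_two unfolding x_def y_def by auto
  have "1 \<le> y" "y \<le> x"
    using assms(1,2) choose2_inv_ge_one choose2_inv_mono unfolding x_def y_def by auto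
  have d: "d = (x gchoose 2) - (y gchoose 2)"
    unfolding x2 y2 by simp
  consider "x \<le> y + 1" | "y + 1 \<le> x" "x \<le> y + 2" | "y + 2 \<le> x"
    by linarith
  then show ?thesis
  proof cases
    case 1
    then have "d gchoose 2 \<le> (x gchoose 3) - (y gchoose 3)"
      unfolding d using gchoose_three_increment_close \<open>1 \<le> y\<close> \<open>y \<le> x\<close> by blast
    then show ?thesis
      using assms(3,6) unfolding x_def y_def by linarith
  next
    case 2
    then have "(d gchoose 2) / 3 + 2 / 3 * (y gchoose 2) \<le> (x gchoose 3) - (y gchoose 3)"
      unfolding d using gchoose_three_increment_mid \<open>1 \<le> y\<close> by blast
    then show ?thesis
      using assms(5,6) y2 unfolding x_def y_def by linarith
  next
    case 3
    then have "(choose2_inv d gchoose 3) + (y gchoose 2) \<le> (x gchoose 3) - (y gchoose 3)"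
      unfolding d using gchoose_three_increment_far \<open>1 \<le> y\<close> by blast
    then show ?thesis
      using assms(4,5) y2 unfolding x_def y_def by linarith
  qed
qed

lemma card_eq_card_filter_add: "finite A \<Longrightarrow> card A = card {x \<in> A. P x} + card {x \<in> A. \<not> P x}"
  using card_Int_Diff[of A "{x. P x}"] by (simp add: set_diff_eq Int_def conj_commute)

lemma subset_card_pred_eq_Diff:
  assumes "finite A" "B \<subseteq> A" "card B = card A - 1" "u \<in> A" "u \<notin> B"
  shows "B = A - {u}"
proof -
  have "B \<subseteq> A - {u}" "card (A - {u}) = card B"
    using assms by auto
  then show ?thesis
    using assms(1) card_seteq[of "A - {u}" B] by simp
qed

lemma Un_eq_if_card_pred:
  assumes "finite A" "B\<^sub>1 \<subseteq> A" "B\<^sub>2 \<subseteq> A" "card B\<^sub>1 = card A - 1" "card B\<^sub>2 = card A - 1"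
    and "B\<^sub>1 \<noteq> B\<^sub>2"
  shows "B\<^sub>1 \<union> B\<^sub>2 = A"
proof -
  have fin: "finite B\<^sub>1" "finite B\<^sub>2"
    using assms(1-3) finite_subset by auto
  then have "\<not> B\<^sub>2 \<subseteq> B\<^sub>1"
    using assms(4-6) card_seteq[of B\<^sub>1 B\<^sub>2] by auto
  then have "card B\<^sub>1 < card (B\<^sub>1 \<union> B\<^sub>2)"
    using fin by (intro psubset_card_mono) auto
  then show ?thesis
    using assms(1-4) card_seteq[of A "B\<^sub>1 \<union> B\<^sub>2"] by (simp add: le_simps)
qed

definition link :: "'a \<Rightarrow> 'a set set \<Rightarrow> 'a set set" where
  "link u \<X> = (\<lambda>X. X - {u}) ` {X \<in> \<X>. u \<in> X}"

lemma inj_on_Diff_vertex: "\<forall>X\<in>\<X>. u \<in> X \<Longrightarrow> inj_on (\<lambda>X. X - {u}) \<X>"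
  by (intro inj_onI) (metis insert_Diff)

lemma card_link: "card (link u \<X>) = card {X \<in> \<X>. u \<in> X}"
  unfolding link_def by (simp add: card_image inj_on_Diff_vertex)

lemma admissibleD:
  assumes "admissible r k b \<A> \<B>"
  shows "finite \<B>" "card \<B> = b"
    and "A \<in> \<A> \<Longrightarrow> finite A \<and> card A = r"
    and "B \<in> \<B> \<Longrightarrow> finite B \<and> card B = r - 1"
    and "A \<in> \<A> \<Longrightarrow> \<exists>C\<subseteq>\<B>. finite C \<and> card C = k \<and> (\<forall>B\<in>C. B \<subseteq> A)"
  using assms unfolding admissible_def ksubsets_def by auto

lemma admissible_pos:
  assumes "admissible r k b \<A> \<B>" "A \<in> \<A>" "2 \<le> k"
  shows "0 < r"
proof (rule ccontr)
  assume "\<not> 0 < r"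
  then have "\<B> \<subseteq> {{}}"
    using admissibleD(4)[OF assms(1)] by (auto simp: card_eq_0_iff)
  moreover obtain C where "C \<subseteq> \<B>" "card C = k"
    using admissibleD(5)[OF assms(1,2)] by blast
  ultimately have "k \<le> 1"
    using card_mono[of "{{}}" C] by auto
  then show False
    using assms(3) by simp
qed

lemma admissible_witnesses_through_vertex:
  assumes "admissible r k b \<A> \<B>" "A \<in> \<A>" "u \<in> A" "C \<subseteq> \<B>" "\<forall>B\<in>C. B \<subseteq> A"
  shows "C - {A - {u}} \<subseteq> {B \<in> \<B>. u \<in> B}"
proof
  fix B
  assume B: "B \<in> C - {A - {u}}"
  then have "B \<in> \<B>" "B \<subseteq> A"
    using assms(4,5) by auto
  then have "u \<notin> B \<Longrightarrow> B = A - {u}"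
    using admissibleD(3,4)[OF assms(1)] assms(2,3) by (intro subset_card_pred_eq_Diff) auto
  then show "B \<in> {B \<in> \<B>. u \<in> B}"
    using B \<open>B \<in> \<B>\<close> by blast
qed

lemma admissible_card_through_vertex_ge:
  assumes "admissible r k b \<A> \<B>" "A \<in> \<A>" "u \<in> A"
  shows "k - 1 \<le> card {B \<in> \<B>. u \<in> B}"
proof -
  obtain C where C: "C \<subseteq> \<B>" "card C = k" "\<forall>B\<in>C. B \<subseteq> A"
    using admissibleD(5)[OF assms(1,2)] by blast
  have "k - 1 \<le> card (C - {A - {u}})"
    using C(2) by (simp add: card_Diff_singleton_if)
  also have "\<dots> \<le> card {B \<in> \<B>. u \<in> B}"
    using admissibleD(1)[OF assms(1)] admissible_witnesses_through_vertex[OF assms C(1,3)]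
    by (intro card_mono) auto
  finally show ?thesis .
qed

lemma admissible_avoiding:
  assumes "admissible r k b \<A> \<B>"
  shows "admissible r k (card {B \<in> \<B>. u \<notin> B}) {A \<in> \<A>. u \<notin> A} {B \<in> \<B>. u \<notin> B}"
  using assms unfolding admissible_def by (auto 0 4)

lemma admissible_link:
  assumes "admissible r k b \<A> \<B>"
  shows "admissible (r - 1) k (card {B \<in> \<B>. u \<in> B}) (link u {A \<in> \<A>. A - {u} \<notin> \<B>}) (link u \<B>)"
  unfolding admissible_def
proof (intro conjI ballI)
  show "link u {A \<in> \<A>. A - {u} \<notin> \<B>} \<subseteq> ksubsets (r - 1)"
    using admissibleD(3)[OF assms] by (auto simp: link_def ksubsets_def)
  show "link u \<B> \<subseteq> ksubsets (r - 1 - 1)"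
    using admissibleD(4)[OF assms] by (auto simp: link_def ksubsets_def)
  show "finite (link u \<B>)"
    using admissibleD(1)[OF assms] by (simp add: link_def)
  show "card (link u \<B>) = card {B \<in> \<B>. u \<in> B}"
    by (rule card_link)
next
  fix A'
  assume "A' \<in> link u {A \<in> \<A>. A - {u} \<notin> \<B>}"
  then obtain A where A: "A \<in> \<A>" "u \<in> A" "A - {u} \<notin> \<B>" "A' = A - {u}"
    unfolding link_def by auto
  obtain C where C: "C \<subseteq> \<B>" "finite C" "card C = k" "\<forall>B\<in>C. B \<subseteq> A"
    using admissibleD(5)[OF assms A(1)] by blast
  have "C \<subseteq> {B \<in> \<B>. u \<in> B}"
    using admissible_witnesses_through_vertex[OF assms A(1,2) C(1,4)] A(3) C(1) by blast
  then have "(\<lambda>B. B - {u}) ` C \<subseteq> link u \<B>" "inj_on (\<lambda>B. B - {u}) C"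
    using inj_on_Diff_vertex[of C u] unfolding link_def by auto
  moreover have "card ((\<lambda>B. B - {u}) ` C) = k"
    using calculation(2) C(3) by (simp add: card_image)
  moreover have "\<forall>B\<in>(\<lambda>B. B - {u}) ` C. B \<subseteq> A'"
    using C(4) A(4) by auto
  ultimately show "\<exists>C. C \<subseteq> link u \<B> \<and> finite C \<and> card C = k \<and> (\<forall>B\<in>C. B \<subseteq> A')"
    using C(2) by blast
qed

definition pairs_below :: "'a set set \<Rightarrow> 'a set \<Rightarrow> 'a set set set" where
  "pairs_below \<B> A = {S. S \<subseteq> \<B> \<and> card S = 2 \<and> (\<forall>B\<in>S. B \<subseteq> A)}"

lemma finite_pairs_below: "finite \<B> \<Longrightarrow> finite (pairs_below \<B> A)"
  unfolding pairs_below_def by (rule finite_subset[of _ "Pow \<B>"]) auto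

lemma card_pairs_below_ge:
  assumes "finite \<B>" "C \<subseteq> \<B>" "\<forall>B\<in>C. B \<subseteq> A"
  shows "card C choose 2 \<le> card (pairs_below \<B> A)"
proof -
  have "card C choose 2 = card {S. S \<subseteq> C \<and> card S = 2}"
    using n_subsets[of C 2] finite_subset[OF assms(2,1)] by simp
  also have "\<dots> \<le> card (pairs_below \<B> A)"
    using assms by (intro card_mono finite_pairs_below) (auto simp: pairs_below_def)
  finally show ?thesis .
qed

lemma sum_card_pairs_below_le:
  assumes "\<A> \<subseteq> ksubsets r" "\<B> \<subseteq> ksubsets (r - 1)" "finite \<A>" "finite \<B>"
  shows "(\<Sum>A\<in>\<A>. card (pairs_below \<B> A)) \<le> card \<B> choose 2"
proof -
  have "pairs_below \<B> A \<inter> pairs_below \<B> A' = {}"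
    if "A \<in> \<A>" "A' \<in> \<A>" "A \<noteq> A'" for A A'
  proof (rule ccontr)
    assume "pairs_below \<B> A \<inter> pairs_below \<B> A' \<noteq> {}"
    then obtain S where S: "S \<in> pairs_below \<B> A" "S \<in> pairs_below \<B> A'"
      by blast
    moreover have "card S = 2"
      using S(1) unfolding pairs_below_def by simp
    ultimately obtain B\<^sub>1 B\<^sub>2 where B: "S = {B\<^sub>1, B\<^sub>2}" "B\<^sub>1 \<noteq> B\<^sub>2"
      unfolding card_2_iff by blast
    have sub: "B\<^sub>1 \<subseteq> A" "B\<^sub>2 \<subseteq> A" "B\<^sub>1 \<subseteq> A'" "B\<^sub>2 \<subseteq> A'"
      using S unfolding B pairs_below_def by auto
    have "card B\<^sub>1 = r - 1" "card B\<^sub>2 = r - 1"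
      using S assms(2) unfolding B pairs_below_def ksubsets_def by auto
    moreover have "finite A" "card A = r" "finite A'" "card A' = r"
      using assms(1) that(1,2) unfolding ksubsets_def by auto
    ultimately have "B\<^sub>1 \<union> B\<^sub>2 = A" "B\<^sub>1 \<union> B\<^sub>2 = A'"
      using Un_eq_if_card_pred[of A B\<^sub>1 B\<^sub>2] Un_eq_if_card_pred[of A' B\<^sub>1 B\<^sub>2] sub B(2) by simp_all
    then show False
      using that(3) by simp
  qed
  then have "(\<Sum>A\<in>\<A>. card (pairs_below \<B> A)) = card (\<Union>A\<in>\<A>. pairs_below \<B> A)"
    using assms(3,4) finite_pairs_below by (intro card_UN_disjoint[symmetric]) auto
  also have "\<dots> \<le> card {S. S \<subseteq> \<B> \<and> card S = 2}"
    using assms(4) by (intro card_mono) (auto simp: pairs_below_def)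
  also have "\<dots> = card \<B> choose 2"
    using n_subsets[OF assms(4)] by simp
  finally show ?thesis .
qed

lemma card_through_vertex_le_pairs:
  assumes "admissible r 3 b \<A> \<B>" "finite \<A>"
  shows "3 * card {A \<in> \<A>. u \<in> A \<and> A - {u} \<notin> \<B>} + card {A \<in> \<A>. u \<in> A \<and> A - {u} \<in> \<B>}
    \<le> card {B \<in> \<B>. u \<in> B} choose 2"
proof -
  define \<B>\<^sub>u where "\<B>\<^sub>u = {B \<in> \<B>. u \<in> B}"
  define \<A>\<^sub>2 where "\<A>\<^sub>2 = {A \<in> \<A>. u \<in> A \<and> A - {u} \<in> \<B>}"
  define \<A>\<^sub>3 where "\<A>\<^sub>3 = {A \<in> \<A>. u \<in> A \<and> A - {u} \<notin> \<B>}"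
  have fin: "finite \<B>\<^sub>u" "finite \<A>\<^sub>2" "finite \<A>\<^sub>3"
    using admissibleD(1)[OF assms(1)] assms(2) by (simp_all add: \<B>\<^sub>u_def \<A>\<^sub>2_def \<A>\<^sub>3_def)
  have witnesses: "\<exists>C\<subseteq>\<B>\<^sub>u. (\<forall>B\<in>C. B \<subseteq> A) \<and> 2 \<le> card C \<and> (A - {u} \<notin> \<B> \<longrightarrow> card C = 3)"
    if A: "A \<in> \<A>" "u \<in> A" for A
  proof -
    obtain C where C: "C \<subseteq> \<B>" "finite C" "card C = 3" "\<forall>B\<in>C. B \<subseteq> A"
      using admissibleD(5)[OF assms(1) A(1)] by blast
    have "C - {A - {u}} \<subseteq> \<B>\<^sub>u"
      unfolding \<B>\<^sub>u_def by (rule admissible_witnesses_through_vertex[OF assms(1) A C(1,4)])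
    moreover have "2 \<le> card (C - {A - {u}})"
      using C(3) by (simp add: card_Diff_singleton_if)
    moreover have "A - {u} \<notin> \<B> \<longrightarrow> C - {A - {u}} = C"
      using C(1) by blast
    ultimately show ?thesis
      using C(3,4) by (intro exI[of _ "C - {A - {u}}"]) auto
  qed
  have "3 \<le> card (pairs_below \<B>\<^sub>u A)" if "A \<in> \<A>\<^sub>3" for A
  proof -
    have "A \<in> \<A>" "u \<in> A" "A - {u} \<notin> \<B>"
      using that unfolding \<A>\<^sub>3_def by auto
    then obtain C where "C \<subseteq> \<B>\<^sub>u" "\<forall>B\<in>C. B \<subseteq> A" "card C = 3"
      using witnesses by (metis (no_types))
    then show ?thesis
      using card_pairs_below_ge[OF fin(1), of C A] by (simp add: choose_two)
  qed
  then have "3 * card \<A>\<^sub>3 \<le> (\<Sum>A\<in>\<A>\<^sub>3. card (pairs_below \<B>\<^sub>u A))"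
    using sum_bounded_below[of \<A>\<^sub>3 "3::nat" "\<lambda>A. card (pairs_below \<B>\<^sub>u A)"] by (simp add: mult.commute)
  moreover have "1 \<le> card (pairs_below \<B>\<^sub>u A)" if "A \<in> \<A>\<^sub>2" for A
  proof -
    have "A \<in> \<A>" "u \<in> A"
      using that unfolding \<A>\<^sub>2_def by auto
    then obtain C where "C \<subseteq> \<B>\<^sub>u" "\<forall>B\<in>C. B \<subseteq> A" "2 \<le> card C"
      using witnesses by (metis (no_types))
    then show ?thesis
      using card_pairs_below_ge[OF fin(1), of C A] zero_less_binomial[of 2 "card C"] by linarith
  qed
  then have "card \<A>\<^sub>2 \<le> (\<Sum>A\<in>\<A>\<^sub>2. card (pairs_below \<B>\<^sub>u A))"
    using sum_bounded_below[of \<A>\<^sub>2 "1::nat" "\<lambda>A. card (pairs_below \<B>\<^sub>u A)"] by simp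
  moreover have "(\<Sum>A\<in>\<A>\<^sub>3. card (pairs_below \<B>\<^sub>u A)) + (\<Sum>A\<in>\<A>\<^sub>2. card (pairs_below \<B>\<^sub>u A))
      = (\<Sum>A\<in>\<A>\<^sub>3 \<union> \<A>\<^sub>2. card (pairs_below \<B>\<^sub>u A))"
    using fin by (intro sum.union_disjoint[symmetric]) (auto simp: \<A>\<^sub>2_def \<A>\<^sub>3_def)
  moreover have "(\<Sum>A\<in>\<A>\<^sub>3 \<union> \<A>\<^sub>2. card (pairs_below \<B>\<^sub>u A)) \<le> card \<B>\<^sub>u choose 2"
  proof (rule sum_card_pairs_below_le)
    show "\<A>\<^sub>3 \<union> \<A>\<^sub>2 \<subseteq> ksubsets r" "\<B>\<^sub>u \<subseteq> ksubsets (r - 1)"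
      using assms(1) unfolding admissible_def \<A>\<^sub>2_def \<A>\<^sub>3_def \<B>\<^sub>u_def by auto
  qed (use fin in auto)
  ultimately show ?thesis
    unfolding \<A>\<^sub>2_def \<A>\<^sub>3_def \<B>\<^sub>u_def by linarith
qed

lemma admissible_card_le_step:
  assumes adm: "admissible r 3 b \<A> \<B>" and "finite \<A>"
    and avoiding: "real (card {A \<in> \<A>. u \<notin> A})
      \<le> choose2_inv (real (card {B \<in> \<B>. u \<notin> B})) gchoose 3"
    and through: "real (card {A \<in> \<A>. u \<in> A \<and> A - {u} \<notin> \<B>})
      \<le> choose2_inv (real (card {B \<in> \<B>. u \<in> B})) gchoose 3"
  shows "real (card \<A>) \<le> choose2_inv (real b) gchoose 3"
proof -
  define \<B>\<^sub>u \<B>\<^sub>n where "\<B>\<^sub>u = {B \<in> \<B>. u \<in> B}" and "\<B>\<^sub>n = {B \<in> \<B>. u \<notin> B}"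
  define \<A>\<^sub>1 \<A>\<^sub>2 \<A>\<^sub>3 where "\<A>\<^sub>1 = {A \<in> \<A>. u \<notin> A}"
    and "\<A>\<^sub>2 = {A \<in> \<A>. u \<in> A \<and> A - {u} \<in> \<B>}" and "\<A>\<^sub>3 = {A \<in> \<A>. u \<in> A \<and> A - {u} \<notin> \<B>}"
  have b: "b = card \<B>\<^sub>u + card \<B>\<^sub>n"
    using admissibleD(1,2)[OF adm] card_eq_card_filter_add unfolding \<B>\<^sub>u_def \<B>\<^sub>n_def by blast
  have "card \<A> = card \<A>\<^sub>1 + card {A \<in> \<A>. u \<in> A}"
    using card_eq_card_filter_add[OF \<open>finite \<A>\<close>, of "\<lambda>A. u \<notin> A"] unfolding \<A>\<^sub>1_def by simp
  also have "card {A \<in> \<A>. u \<in> A} = card \<A>\<^sub>2 + card \<A>\<^sub>3"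
  proof -
    have "{A \<in> {A \<in> \<A>. u \<in> A}. A - {u} \<in> \<B>} = \<A>\<^sub>2" "{A \<in> {A \<in> \<A>. u \<in> A}. A - {u} \<notin> \<B>} = \<A>\<^sub>3"
      unfolding \<A>\<^sub>2_def \<A>\<^sub>3_def by auto
    then show ?thesis
      using card_eq_card_filter_add[of "{A \<in> \<A>. u \<in> A}" "\<lambda>A. A - {u} \<in> \<B>"] \<open>finite \<A>\<close>
      by simp
  qed
  finally have card_\<A>: "card \<A> = card \<A>\<^sub>1 + card \<A>\<^sub>2 + card \<A>\<^sub>3"
    by simp
  have "card \<A>\<^sub>2 \<le> card \<B>\<^sub>n"
    using admissibleD(1)[OF adm] inj_on_Diff_vertex[of \<A>\<^sub>2 u]
    by (intro card_inj_on_le[where f = "\<lambda>A. A - {u}"]) (auto simp: \<A>\<^sub>2_def \<B>\<^sub>n_def)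
  moreover have "3 * card \<A>\<^sub>3 + card \<A>\<^sub>2 \<le> card \<B>\<^sub>u choose 2"
    using card_through_vertex_le_pairs[OF adm \<open>finite \<A>\<close>, of u]
    unfolding \<A>\<^sub>2_def \<A>\<^sub>3_def \<B>\<^sub>u_def .
  then have "3 * real (card \<A>\<^sub>3) + real (card \<A>\<^sub>2) \<le> real (card \<B>\<^sub>u) gchoose 2"
    unfolding binomial_gbinomial[symmetric] by linarith
  ultimately show ?thesis
    using choose2_inv_gchoose_three_split[of "card \<B>\<^sub>u" b "card \<A>\<^sub>3" "card \<A>\<^sub>2"]
      avoiding through b card_\<A>
    unfolding \<A>\<^sub>1_def \<A>\<^sub>3_def \<B>\<^sub>u_def \<B>\<^sub>n_def by simp
qed

theorem admissible_card_le:
  assumes "admissible r 3 b \<A> \<B>" "finite \<A>"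
  shows "real (card \<A>) \<le> choose2_inv (real b) gchoose 3"
  using assms
proof (induction "r + b" arbitrary: r b \<A> \<B> rule: less_induct)
  case less
  note adm = less.prems(1)
  show ?case
  proof (cases "\<A> = {}")
    case True
    then show ?thesis
      using choose2_inv_gchoose_three_nonneg by simp
  next
    case False
    then obtain A\<^sub>0 where A\<^sub>0: "A\<^sub>0 \<in> \<A>"
      by blast
    have "0 < r"
      using admissible_pos[OF adm A\<^sub>0] by simp
    then obtain u where u: "u \<in> A\<^sub>0"
      using admissibleD(3)[OF adm A\<^sub>0] by fastforce
    have b: "b = card {B \<in> \<B>. u \<in> B} + card {B \<in> \<B>. u \<notin> B}"
      using admissibleD(1,2)[OF adm] card_eq_card_filter_add by blast
    moreover have "0 < card {B \<in> \<B>. u \<in> B}"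
      using admissible_card_through_vertex_ge[OF adm A\<^sub>0 u] by simp
    moreover have "card (link u {A \<in> \<A>. A - {u} \<notin> \<B>}) = card {A \<in> \<A>. u \<in> A \<and> A - {u} \<notin> \<B>}"
      unfolding card_link by (rule arg_cong[where f = card]) auto
    ultimately show ?thesis
      using less.hyps[OF _ admissible_avoiding[OF adm, of u]]
        less.hyps[OF _ admissible_link[OF adm, of u]] less.prems(2) \<open>0 < r\<close>
      by (intro admissible_card_le_step[OF adm less.prems(2), of u]) (simp_all add: link_def)
  qed
qed

theorem mainTheorem4:
  fixes r b :: nat and x :: real
  assumes "r \<ge> 3" and "x > 1" and "b > 0" and "real b = x * (x - 1) / 2"
  shows "f r 3 b \<le> ereal (x * (x - 1) * (x - 2) / 6)"
proof -
  have "x gchoose 2 = real b"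
    using assms(4) by (simp add: gchoose_two_real)
  then have "choose2_inv (real b) = x"
    using choose2_inv_of_gchoose_two[of x] assms(2) by simp
  then have "real (card \<A>) \<le> x gchoose 3" if "finite \<A>" "admissible r 3 b \<A> \<B>" for \<A> \<B>
    using admissible_card_le that by metis
  then show ?thesis
    unfolding f_def gchoose_three_real[symmetric] by (auto intro!: Sup_least)
qed

end
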